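(* Let $k$ be a field of characteristic $0$, $R=k[x_1,\ldots,x_n]$, and let $I\subset R$ be a homogeneous Artinian ideal, with $f_2,\ldots,f_n$ and $J_1,\ldots,J_{n-1}$ defined for $\mathrm{gin}(I)$ as in the context. Then $\mathrm{gin}(I)$ is almost reverse lexicographic if and only if for every $1\le i\le n-1$ the following two conditions hold: (1) $f_{i+1}(0,\ldots,0,|\alpha|+1)+1\le f_{i+1}(\alpha)$ for every $\alpha=(\alpha_1,\ldots,\alpha_i)\in J_i$; (2) $f_{i+1}(\beta)\le f_{i+1}(\alpha)$ for all $\alpha,\beta\in J_i$ with $|\alpha|=|\beta|$ and $\alpha<\beta$.
   Context: Monomials of $R$ are ordered by the degree reverse lexicographic order with $x_1>\cdots>x_n$; $\mathrm{gin}(I)$ is the generic initial ideal of $I$ with respect to this order. A homogeneous ideal is Artinian if $R/I$ is finite-dimensional over $k$. A monomial ideal $J$ is almost reverse lexicographic if for every minimal generator $m$ of $J$ and every monomial $M$ with $\deg M=\deg m$ and $M>m$, we have $M\in J$. Define $f_1=\min\{t\mid x_1^t\in\mathrm{gin}(I)\}$ and for $2\le i\le n$, $f_i(\alpha_1,\ldots,\alpha_{i-1})=\min\{t\ge0\mid x_1^{\alpha_1}\cdots x_{i-1}^{\alpha_{i-1}}x_i^t\in\mathrm{gin}(I)\}$ (value $\infty$ if none). For $1\le i\le n-1$, $J_i=\{(\alpha_1,\ldots,\alpha_i)\in\mathbb{Z}_{\ge0}^i\mid \alpha_1<f_1,\ \alpha_j<f_j(\alpha_1,\ldots,\alpha_{j-1})\text{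 for }2\le j\le i\}$. For $\alpha\in\mathbb{Z}_{\ge0}^i$, $|\alpha|=\sum_j\alpha_j$, and for $\alpha,\beta\in\mathbb{Z}_{\ge0}^i$ we write $\alpha<\beta$ if $x_1^{\alpha_1}\cdots x_i^{\alpha_i}<x_1^{\beta_1}\cdots x_i^{\beta_i}$ in the reverse lexicographic order. *)

theory Defs
  imports "HOL-Library.Poly_Mapping" "HOL-Library.Extended_Nat"
begin

text \<open>Variables x_1,...,x_n are encoded by the indices 0,...,n-1.
  A monomial is a finitely supported exponent vector (nat =>0 nat);
  a polynomial over k is a finitely supported map from monomials to k.\<close>

type_synonym monom = "nat \<Rightarrow>\<^sub>0 nat"
type_synonym 'k mpoly = "monom \<Rightarrow>\<^sub>0 'k"

definition mdeg :: "monom \<Rightarrow> nat" where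
  "mdeg m = (\<Sum>i\<in>Poly_Mapping.keys m. Poly_Mapping.lookup m i)"

definition monom_in :: "nat \<Rightarrow> monom \<Rightarrow> bool" where
  "monom_in n m \<longleftrightarrow> Poly_Mapping.keys m \<subseteq> {..<n}"

definition poly_ring :: "nat \<Rightarrow> ('k::field) mpoly set" where
  "poly_ring n = {f. \<forall>m\<in>Poly_Mapping.keys f. monom_in n m}"

definition const :: "'k::field \<Rightarrow> 'k mpoly" where
  "const c = Poly_Mapping.single 0 c"

definition is_ideal :: "nat \<Rightarrow> ('k::field) mpoly set \<Rightarrow> bool" where
  "is_ideal n I \<longleftrightarrow> I \<subseteq> poly_ring n \<and> 0 \<in> I \<and>
     (\<forall>f\<in>I. \<forall>g\<in>I. f + g \<in> I) \<and> (\<forall>f\<in>I. \<forall>r\<in>poly_ring n. r * f \<in> I)"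

definition hom_comp :: "nat \<Rightarrow> ('k::field) mpoly \<Rightarrow> 'k mpoly" where
  "hom_comp d f = (\<Sum>m\<in>{m\<in>Poly_Mapping.keys f. mdeg m = d}. Poly_Mapping.single m (Poly_Mapping.lookup f m))"

definition homogeneous_ideal :: "nat \<Rightarrow> ('k::field) mpoly set \<Rightarrow> bool" where
  "homogeneous_ideal n I \<longleftrightarrow> is_ideal n I \<and> (\<forall>f\<in>I. \<forall>d. hom_comp d f \<in> I)"

text \<open>Artinian: R/I is a finite-dimensional k-vector space, i.e. it is spanned by the
  classes of finitely many polynomials.\<close>
definition artinian :: "nat \<Rightarrow> ('k::field) mpoly set \<Rightarrow> bool" where
  "artinian n I \<longleftrightarrow> (\<exists>B. finite B \<and> B \<subseteq> poly_ring n \<and>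
     (\<forall>f\<in>poly_ring n. \<exists>c. f - (\<Sum>b\<in>B. const (c b) * b) \<in> I))"

text \<open>Degree reverse lexicographic order with x_1 > ... > x_n: drl_less m m' means m < m'.\<close>
definition drl_less :: "monom \<Rightarrow> monom \<Rightarrow> bool" where
  "drl_less m m' \<longleftrightarrow> mdeg m < mdeg m' \<or>
     (mdeg m = mdeg m' \<and> (\<exists>j. Poly_Mapping.lookup m j > Poly_Mapping.lookup m' j \<and> (\<forall>l>j. Poly_Mapping.lookup m l = Poly_Mapping.lookup m' l)))"

definition lead_monom :: "('k::zero) mpoly \<Rightarrow> monom" where
  "lead_monom f = (THE m. m \<in> Poly_Mapping.keys f \<and> (\<forall>m'\<in>Poly_Mapping.keys f. m' \<noteq> m \<longrightarrow> drl_less m' m))"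

text \<open>Initial ideal, represented by the set of monomials it contains.\<close>
definition in_ideal :: "('k::field) mpoly set \<Rightarrow> monom set" where
  "in_ideal I = {lead_monom f | f. f \<in> I \<and> f \<noteq> 0}"

text \<open>n x n matrices as functions nat => nat => k (only entries < n matter).\<close>
definition invertible_n :: "nat \<Rightarrow> (nat \<Rightarrow> nat \<Rightarrow> 'k::field) \<Rightarrow> bool" where
  "invertible_n n g \<longleftrightarrow> (\<exists>h. (\<forall>i<n. \<forall>j<n. (\<Sum>l<n. g i l * h l j) = (if i = j then 1 else 0)) \<and>
                                (\<forall>i<n. \<forall>j<n. (\<Sum>l<n. h i l * g l j) = (if i = j then 1 else 0)))"

definition lin_form :: "nat \<Rightarrow> (nat \<Rightarrow> nat \<Rightarrow> 'k::field) \<Rightarrow> nat \<Rightarrow> 'k mpoly" where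
  "lin_form n g j = (\<Sum>i<n. Poly_Mapping.single (Poly_Mapping.single i 1) (g i j))"

definition act :: "nat \<Rightarrow> (nat \<Rightarrow> nat \<Rightarrow> 'k::field) \<Rightarrow> 'k mpoly \<Rightarrow> 'k mpoly" where
  "act n g f = (\<Sum>m\<in>Poly_Mapping.keys f. const (Poly_Mapping.lookup f m) * (\<Prod>j\<in>Poly_Mapping.keys m. lin_form n g j ^ Poly_Mapping.lookup m j))"

text \<open>Evaluation of a polynomial in the n^2 matrix entries (variable i*n+j is entry (i,j)).\<close>
definition eval_mat :: "nat \<Rightarrow> ('k::field) mpoly \<Rightarrow> (nat \<Rightarrow> nat \<Rightarrow> 'k) \<Rightarrow> 'k" where
  "eval_mat n P g = (\<Sum>m\<in>Poly_Mapping.keys P. Poly_Mapping.lookup P m * (\<Prod>v\<in>Poly_Mapping.keys m. g (v div n) (v mod n) ^ Poly_Mapping.lookup m v))"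

text \<open>J is the generic initial ideal of I: there is a nonempty Zariski open subset
  U = D(P) \<inter> GL_n(k) of GL_n(k) with in(g I) = J for all g in U
  (basic open sets D(P) \<inter> GL_n form a base of the Zariski topology on GL_n).\<close>
definition is_gin :: "nat \<Rightarrow> ('k::field) mpoly set \<Rightarrow> monom set \<Rightarrow> bool" where
  "is_gin n I J \<longleftrightarrow> (\<exists>P. P \<in> poly_ring (n * n) \<and>
     (\<exists>g. invertible_n n g \<and> eval_mat n P g \<noteq> 0) \<and>
     (\<forall>g. invertible_n n g \<and> eval_mat n P g \<noteq> 0 \<longrightarrow> in_ideal (act n g ` I) = J))"

definition mdvd :: "monom \<Rightarrow> monom \<Rightarrow> bool" where
  "mdvd m m' \<longleftrightarrow> (\<forall>i. Poly_Mapping.lookup m i \<le> Poly_Mapping.lookup m' i)"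

definition min_gen :: "monom set \<Rightarrow> monom \<Rightarrow> bool" where
  "min_gen J m \<longleftrightarrow> m \<in> J \<and> (\<forall>m'\<in>J. mdvd m' m \<longrightarrow> m' = m)"

definition almost_revlex :: "nat \<Rightarrow> monom set \<Rightarrow> bool" where
  "almost_revlex n J \<longleftrightarrow> (\<forall>m. min_gen J m \<longrightarrow>
     (\<forall>M. monom_in n M \<and> mdeg M = mdeg m \<and> drl_less m M \<longrightarrow> M \<in> J))"

definition list_monom :: "nat list \<Rightarrow> monom" where
  "list_monom a = (\<Sum>j<length a. Poly_Mapping.single j (a ! j))"

text \<open>f J a = f_{i+1}(a_1,...,a_i) where i = length a (so f J [] = f_1);
  value \<infinity> if no such t exists.\<close>
definition fval :: "monom set \<Rightarrow> nat list \<Rightarrow> enat" where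
  "fval J a = (if \<exists>t. list_monom (a @ [t]) \<in> J
               then enat (LEAST t. list_monom (a @ [t]) \<in> J) else \<infinity>)"

definition Jset :: "monom set \<Rightarrow> nat \<Rightarrow> nat list set" where
  "Jset J i = {a. length a = i \<and> (\<forall>j<i. enat (a ! j) < fval J (take j a))}"

end

theory Submission
  imports Defs
begin

text \<open>
  Only one property of gin(I) is used: it is the initial ideal of gI for an invertible g, hence
  a monomial ideal.

  If G is almost revlex and x^\<alpha> x_(i+1)^t \<in> G with \<alpha> \<in> J_i, it is divisible by a minimal
  generator x^\<gamma> x_(i+1)^u with \<gamma> \<le> \<alpha> and u \<ge> 1. Moving one unit of exponent from x_(i+1) to
  x_1, ..., x_i, or replacing \<gamma> = \<alpha> by some \<beta> > \<alpha> of the same degree, gives a larger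
  monomial of the same degree, which therefore lies in G; this yields (1) and (2).

  Conversely, one shows by induction on k that every monomial of the same degree above a
  minimal generator in x_1, ..., x_k lies in G. A minimal generator x^\<alpha> x_(k+1)^t has
  f_(k+1)(\<alpha>) = t, and any larger x^\<beta> x_(k+1)^s of the same degree has s \<le> t. If s = t then
  \<alpha> < \<beta> and (2) applies. If s < t, iterating (1) along pure powers gives
  x_k^(|\<alpha>|+r) x_(k+1)^(t-r) \<in> G, and (2) together with the induction hypothesis carries this
  from the pure power x_k^|\<beta>| to x^\<beta>.
\<close>

section \<open>Exponent vectors and divisibility\<close>

lemma lookup_list_monom [simp]:
  "Poly_Mapping.lookup (list_monom a) j = (if j < length a then a ! j else 0)"
  unfolding list_monom_def by (simp add: lookup_sum lookup_single when_def)

lemma lookup_pure_power [simp]: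
  "Poly_Mapping.lookup (list_monom (replicate k 0 @ [d])) j = (if j = k then d else 0)"
  by (simp add: nth_append)

lemma list_monom_append:
  "list_monom (a @ [t]) = list_monom a + Poly_Mapping.single (length a) t"
  by (rule poly_mapping_eqI) (simp add: lookup_add lookup_single nth_append when_def)

lemma list_monom_eq_iff:
  assumes "length a = length b"
  shows "list_monom a = list_monom b \<longleftrightarrow> a = b"
proof
  assume eq: "list_monom a = list_monom b"
  show "a = b"
  proof (rule nth_equalityI)
    fix j assume "j < length a"
    then show "a ! j = b ! j"
      using arg_cong[OF eq, of "\<lambda>m. Poly_Mapping.lookup m j"] assms by simp
  qed (rule assms)
qed simp

lemma list_monom_of_support:
  assumes "\<And>j. k \<le> j \<Longrightarrow> Poly_Mapping.lookup m j = 0"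
  shows "m = list_monom (map (Poly_Mapping.lookup m) [0..<k])"
  by (rule poly_mapping_eqI) (simp add: assms)

lemma list_monom_split_top:
  assumes "\<forall>l>k. Poly_Mapping.lookup m l = 0"
  shows "m = list_monom (map (Poly_Mapping.lookup m) [0..<k] @ [Poly_Mapping.lookup m k])"
proof -
  have "m = list_monom (map (Poly_Mapping.lookup m) [0..<Suc k])"
    by (rule list_monom_of_support) (use assms in simp)
  then show ?thesis by simp
qed

lemma monom_in_Suc_top_zero:
  assumes "monom_in (Suc k) m" "Poly_Mapping.lookup m k = 0"
  shows "monom_in k m"
  unfolding monom_in_def
proof
  fix x assume x: "x \<in> Poly_Mapping.keys m"
  then have "x < Suc k" using assms(1) unfolding monom_in_def by blast
  moreover have "x \<noteq> k" using x assms(2) by (auto simp: in_keys_iff)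
  ultimately show "x \<in> {..<k}" by simp
qed

lemma monom_in_list_monom: "length a \<le> n \<Longrightarrow> monom_in n (list_monom a)"
  unfolding monom_in_def by (auto simp: in_keys_iff split: if_splits)

lemma keys_diff_subset: "Poly_Mapping.keys (a - b :: monom) \<subseteq> Poly_Mapping.keys a"
  by (auto simp: in_keys_iff lookup_minus)

lemma monom_in_diff: "monom_in n a \<Longrightarrow> monom_in n (a - b)"
  unfolding monom_in_def using keys_diff_subset by blast

lemma mdeg_eq_sum_superset:
  "finite S \<Longrightarrow> Poly_Mapping.keys m \<subseteq> S \<Longrightarrow> mdeg m = (\<Sum>i\<in>S. Poly_Mapping.lookup m i)"
  unfolding mdeg_def by (rule sum.mono_neutral_left) (auto simp: in_keys_iff)

lemma mdeg_add: "mdeg (a + b) = mdeg a + mdeg b"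
proof -
  let ?S = "Poly_Mapping.keys a \<union> Poly_Mapping.keys b"
  have "mdeg (a + b) = (\<Sum>i\<in>?S. Poly_Mapping.lookup (a + b) i)"
    by (rule mdeg_eq_sum_superset) (use keys_add[of a b] in auto)
  moreover have "mdeg a = (\<Sum>i\<in>?S. Poly_Mapping.lookup a i)"
    and "mdeg b = (\<Sum>i\<in>?S. Poly_Mapping.lookup b i)"
    by (rule mdeg_eq_sum_superset; auto)+
  ultimately show ?thesis by (simp add: lookup_add sum.distrib)
qed

lemma mdeg_single [simp]: "mdeg (Poly_Mapping.single i t) = t"
  unfolding mdeg_def by simp

lemma mdeg_zero [simp]: "mdeg 0 = 0"
  unfolding mdeg_def by simp

lemma list_monom_Nil [simp]: "list_monom [] = 0"
  unfolding list_monom_def by simp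

lemma mdeg_list_monom [simp]: "mdeg (list_monom a) = sum_list a"
  by (induction a rule: rev_induct) (simp_all add: list_monom_append mdeg_add)

lemma mdvd_refl [simp]: "mdvd m m"
  unfolding mdvd_def by simp

lemma mdvd_trans: "mdvd a b \<Longrightarrow> mdvd b c \<Longrightarrow> mdvd a c"
  unfolding mdvd_def using le_trans by blast

lemma mdvd_list_monom:
  "length a \<le> length b \<Longrightarrow> (\<And>j. j < length a \<Longrightarrow> a ! j \<le> b ! j) \<Longrightarrow>
   mdvd (list_monom a) (list_monom b)"
  unfolding mdvd_def by auto

lemma mdvd_list_monom_append: "mdvd (list_monom a) (list_monom (a @ b))"
  by (rule mdvd_list_monom) (simp_all add: nth_append)

lemma mdvd_imp_eq_add: "mdvd a b \<Longrightarrow> b = (b - a) + a"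
  unfolding mdvd_def by (intro poly_mapping_eqI) (simp add: lookup_add lookup_minus)

lemma mdeg_mono: "mdvd a b \<Longrightarrow> mdeg a \<le> mdeg b"
  using mdvd_imp_eq_add mdeg_add by (metis le_add2)

lemma sum_list_le_pointwise:
  fixes a c :: "nat list"
  shows "length c = length a \<Longrightarrow> \<forall>j<length a. c ! j \<le> a ! j \<Longrightarrow> sum_list c \<le> sum_list a"
  using mdeg_mono[OF mdvd_list_monom[of c a]] by simp

lemma mdeg_eq_0_iff: "mdeg m = 0 \<longleftrightarrow> m = 0"
  unfolding mdeg_def by (auto simp: in_keys_iff poly_mapping_eqI)

lemma mdvd_antisym_mdeg:
  assumes "mdvd a b" "mdeg a = mdeg b"
  shows "a = b"
proof -
  have "mdeg (b - a) = 0"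
    using assms mdvd_imp_eq_add[OF assms(1)] mdeg_add[of "b - a" a] by simp
  then show ?thesis using mdvd_imp_eq_add[OF assms(1)] by (simp add: mdeg_eq_0_iff)
qed

lemma min_gen_dvd_exists:
  assumes "m \<in> G"
  obtains g where "min_gen G g" "mdvd g m"
proof -
  obtain g where g: "g \<in> G" "mdvd g m"
    and least: "\<And>y. y \<in> G \<Longrightarrow> mdvd y m \<Longrightarrow> mdeg g \<le> mdeg y"
    using ex_has_least_nat[of "\<lambda>g. g \<in> G \<and> mdvd g m" m mdeg] assms by auto
  have "min_gen G g"
    unfolding min_gen_def
  proof (intro conjI ballI impI)
    fix m' assume "m' \<in> G" "mdvd m' g"
    then show "m' = g"
      using least[of m'] mdeg_mono[of m' g] mdvd_trans[of m' g m] g(2)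
      by (simp add: mdvd_antisym_mdeg)
  qed (rule g(1))
  then show thesis using g(2) by (rule that)
qed

lemma exists_list_below_with_sum:
  "(e::nat) \<le> sum_list d \<Longrightarrow>
   \<exists>d'. length d' = length d \<and> (\<forall>j<length d. d' ! j \<le> d ! j) \<and> sum_list d' = e"
proof (induction d arbitrary: e)
  case Nil then show ?case by simp
next
  case (Cons x xs)
  then have "e - min x e \<le> sum_list xs" by simp
  with Cons.IH obtain r where "length r = length xs" "\<forall>j<length xs. r ! j \<le> xs ! j"
    "sum_list r = e - min x e"
    by blast
  then show ?case
    by (intro exI[of _ "min x e # r"]) (auto simp: nth_Cons')
qed

section \<open>The degree reverse lexicographic order\<close>

lemma drl_less_irrefl: "\<not> drl_less m m"
  unfolding drl_less_def by simp

lemma drl_less_mdeg: "drl_less a b \<Longrightarrow> mdeg a \<le> mdeg b"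
  unfolding drl_less_def by auto

lemma drl_less_same_mdegE:
  assumes "drl_less m M" "mdeg M = mdeg m"
  obtains j where "Poly_Mapping.lookup m j > Poly_Mapping.lookup M j"
    "\<forall>l>j. Poly_Mapping.lookup m l = Poly_Mapping.lookup M l"
  using assms unfolding drl_less_def by auto

lemma drl_less_trans:
  assumes ab: "drl_less a b" and bc: "drl_less b c"
  shows "drl_less a c"
proof (cases "mdeg a < mdeg c")
  case True then show ?thesis unfolding drl_less_def by simp
next
  case False
  with drl_less_mdeg[OF ab] drl_less_mdeg[OF bc]
  have e1: "mdeg b = mdeg a" and e2: "mdeg c = mdeg b" by auto
  obtain j1 where j1: "Poly_Mapping.lookup a j1 > Poly_Mapping.lookup b j1"
    "\<forall>l>j1. Poly_Mapping.lookup a l = Poly_Mapping.lookup b l"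
    using ab e1 by (rule drl_less_same_mdegE)
  obtain j2 where j2: "Poly_Mapping.lookup b j2 > Poly_Mapping.lookup c j2"
    "\<forall>l>j2. Poly_Mapping.lookup b l = Poly_Mapping.lookup c l"
    using bc e2 by (rule drl_less_same_mdegE)
  have "Poly_Mapping.lookup a (max j1 j2) > Poly_Mapping.lookup c (max j1 j2)"
    using j1 j2 by (cases j1 j2 rule: linorder_cases) (auto simp: max_def)
  then show ?thesis
    unfolding drl_less_def using e1 e2 j1(2) j2(2) by (intro disjI2 conjI exI[of _ "max j1 j2"]) auto
qed

lemma drl_less_total:
  assumes "m \<noteq> m'"
  shows "drl_less m m' \<or> drl_less m' m"
proof (cases "mdeg m = mdeg m'")
  case False then show ?thesis unfolding drl_less_def by linarith
next
  case True
  define D where "D = {j. Poly_Mapping.lookup m j \<noteq> Poly_Mapping.lookup m' j}"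
  have "finite D"
    by (rule finite_subset[of _ "Poly_Mapping.keys m \<union> Poly_Mapping.keys m'"])
      (auto simp: D_def in_keys_iff)
  moreover have "D \<noteq> {}"
  proof
    assume "D = {}"
    then have "m = m'" by (intro poly_mapping_eqI) (auto simp: D_def)
    with assms show False by simp
  qed
  ultimately have top: "Max D \<in> D" by (rule Max_in)
  have "l \<notin> D" if "Max D < l" for l
    using Max_ge[OF \<open>finite D\<close>, of l] that by linarith
  then have agree: "\<forall>l>Max D. Poly_Mapping.lookup m l = Poly_Mapping.lookup m' l"
    unfolding D_def by blast
  from top consider "Poly_Mapping.lookup m (Max D) > Poly_Mapping.lookup m' (Max D)"
    | "Poly_Mapping.lookup m' (Max D) > Poly_Mapping.lookup m (Max D)"
    unfolding D_def by fastforce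
  then show ?thesis
  proof cases
    case 1 then show ?thesis unfolding drl_less_def using True agree by blast
  next
    case 2 then show ?thesis unfolding drl_less_def using True agree by (simp add: eq_commute) blast
  qed
qed

lemma drl_less_add_left_cancel [simp]: "drl_less (v + m) (v + m') \<longleftrightarrow> drl_less m m'"
  unfolding drl_less_def mdeg_add by (auto simp: lookup_add)

lemma drl_less_append_cancel:
  assumes "length a = length b"
  shows "drl_less (list_monom (a @ [u])) (list_monom (b @ [u])) \<longleftrightarrow> drl_less (list_monom a) (list_monom b)"
  using assms drl_less_add_left_cancel[of "Poly_Mapping.single (length b) u"]
  by (simp add: list_monom_append add.commute)

lemma drl_less_top_exponent:
  assumes "drl_less m M" "mdeg M = mdeg m" "\<forall>l>k. Poly_Mapping.lookup m l = 0"
  shows "\<forall>l>k. Poly_Mapping.lookup M l = 0" and "Poly_Mapping.lookup M k \<le> Poly_Mapping.lookup m k"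
proof -
  obtain j where j: "Poly_Mapping.lookup m j > Poly_Mapping.lookup M j"
    "\<forall>l>j. Poly_Mapping.lookup m l = Poly_Mapping.lookup M l"
    using assms(1,2) by (rule drl_less_same_mdegE)
  have "j \<le> k" using j(1) assms(3) by (metis leI less_nat_zero_code)
  then show "\<forall>l>k. Poly_Mapping.lookup M l = 0" using j(2) assms(3) by auto
  show "Poly_Mapping.lookup M k \<le> Poly_Mapping.lookup m k"
    using j \<open>j \<le> k\<close> by (cases "j = k") auto
qed

lemma drl_less_last_exponent:
  assumes "length c = length d" "sum_list c + u = sum_list d + v" "v < u"
  shows "drl_less (list_monom (c @ [u])) (list_monom (d @ [v]))"
  unfolding drl_less_def
proof (intro disjI2 conjI exI[of _ "length c"] allI impI)
  show "mdeg (list_monom (c @ [u])) = mdeg (list_monom (d @ [v]))" using assms(2) by simp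
qed (use assms in \<open>simp_all add: nth_append\<close>)

lemma drl_less_pure_power:
  assumes "1 \<le> length d" "d \<noteq> replicate (length d - 1) 0 @ [sum_list d]"
  shows "drl_less (list_monom (replicate (length d - 1) 0 @ [sum_list d])) (list_monom d)"
proof -
  define c where "c = butlast d"
  have d: "d = c @ [last d]"
    unfolding c_def using assms(1) by (cases d rule: rev_cases) auto
  have "last d < sum_list d"
  proof (rule ccontr)
    assume "\<not> last d < sum_list d"
    then have "sum_list c = 0" and last: "last d = sum_list d"
      using arg_cong[OF d, of sum_list] by simp_all
    then have "c = replicate (length d - 1) 0"
      by (intro replicate_eqI) (simp_all add: c_def)
    with d last assms(2) show False by simp
  qed
  then show ?thesis
    using arg_cong[OF d, of sum_list] by (subst (2) d) (rule drl_less_last_exponent; simp add: c_def)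
qed

section \<open>Almost revlex monomial ideals\<close>

lemma enat_add_one_le_iff: "x + 1 \<le> enat u \<longleftrightarrow> 1 \<le> u \<and> x \<le> enat (u - 1)"
  by (cases x) (auto simp: one_enat_def)

definition fval_gap :: "monom set \<Rightarrow> nat \<Rightarrow> bool" where
  "fval_gap G i \<longleftrightarrow>
     (\<forall>a\<in>Jset G i. fval G (replicate (i - 1) 0 @ [sum_list a + 1]) + 1 \<le> fval G a)"

definition fval_antitone :: "monom set \<Rightarrow> nat \<Rightarrow> bool" where
  "fval_antitone G i \<longleftrightarrow>
     (\<forall>a\<in>Jset G i. \<forall>b\<in>Jset G i. sum_list a = sum_list b \<and>
        drl_less (list_monom a) (list_monom b) \<longrightarrow> fval G b \<le> fval G a)"

definition almost_revlex_below :: "nat \<Rightarrow> nat \<Rightarrow> monom set \<Rightarrow> bool" where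
  "almost_revlex_below n k G \<longleftrightarrow> (\<forall>m. min_gen G m \<and> monom_in k m \<longrightarrow>
     (\<forall>M. monom_in n M \<and> mdeg M = mdeg m \<and> drl_less m M \<longrightarrow> M \<in> G))"

lemma almost_revlex_below_mono:
  "k \<le> l \<Longrightarrow> almost_revlex_below n l G \<Longrightarrow> almost_revlex_below n k G"
  unfolding almost_revlex_below_def monom_in_def by (meson lessThan_subset_iff order_trans)

lemma almost_revlex_below_one: "almost_revlex_below n 1 G"
  unfolding almost_revlex_below_def
proof (intro allI impI, elim conjE)
  fix m M assume "monom_in 1 m" "mdeg M = mdeg m" "drl_less m M"
  then have m0: "\<forall>l>0. Poly_Mapping.lookup m l = 0"
    unfolding monom_in_def by (auto simp: in_keys_iff)
  obtain j where j: "Poly_Mapping.lookup m j > Poly_Mapping.lookup M j"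
    "\<forall>l>j. Poly_Mapping.lookup m l = Poly_Mapping.lookup M l"
    using \<open>drl_less m M\<close> \<open>mdeg M = mdeg m\<close> by (rule drl_less_same_mdegE)
  then have "j = 0" using m0 by (metis gr0I less_nat_zero_code)
  then have "\<forall>l>0. Poly_Mapping.lookup M l = 0" using j(2) m0 by simp
  then have "mdeg M = Poly_Mapping.lookup M 0" and "mdeg m = Poly_Mapping.lookup m 0"
    using m0 by (subst mdeg_eq_sum_superset[of "{0}"]; auto simp: in_keys_iff)+
  with j(1) \<open>j = 0\<close> \<open>mdeg M = mdeg m\<close> show "M \<in> G" by simp
qed

locale monomial_ideal =
  fixes n :: nat and G :: "monom set"
  assumes monom_in_G: "m \<in> G \<Longrightarrow> monom_in n m"
    and dvd_closed: "m \<in> G \<Longrightarrow> mdvd m m' \<Longrightarrow> monom_in n m' \<Longrightarrow> m' \<in> G"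
begin

lemma list_monom_dvd_closed:
  "list_monom a \<in> G \<Longrightarrow> mdvd (list_monom a) (list_monom b) \<Longrightarrow> length b \<le> n \<Longrightarrow>
   list_monom b \<in> G"
  using dvd_closed monom_in_list_monom by blast

lemma almost_revlex_iff_below: "almost_revlex n G \<longleftrightarrow> almost_revlex_below n n G"
  unfolding almost_revlex_def almost_revlex_below_def min_gen_def using monom_in_G by blast

lemma fval_le_iff:
  assumes "length a < n"
  shows "fval G a \<le> enat t \<longleftrightarrow> list_monom (a @ [t]) \<in> G"
proof
  assume "list_monom (a @ [t]) \<in> G"
  then show "fval G a \<le> enat t"
    unfolding fval_def by (auto intro: Least_le)
next
  assume le: "fval G a \<le> enat t"
  then have ex: "\<exists>t. list_monom (a @ [t]) \<in> G"
    unfolding fval_def by (auto split: if_splits)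
  define t0 where "t0 = (LEAST t. list_monom (a @ [t]) \<in> G)"
  have "list_monom (a @ [t0]) \<in> G"
    unfolding t0_def using ex by (rule LeastI_ex)
  moreover have "t0 \<le> t" using le ex unfolding fval_def t0_def by simp
  ultimately show "list_monom (a @ [t]) \<in> G"
    using assms by (elim list_monom_dvd_closed) (auto intro!: mdvd_list_monom simp: nth_append)
qed

lemma mem_Jset_iff:
  assumes "1 \<le> i" "i \<le> n"
  shows "a \<in> Jset G i \<longleftrightarrow> length a = i \<and> list_monom a \<notin> G"
proof -
  have step: "enat (a ! j) < fval G (take j a) \<longleftrightarrow> list_monom (take (Suc j) a) \<notin> G"
    if "j < length a" "length a \<le> n" for j
    using fval_le_iff[of "take j a" "a ! j"] that by (simp add: take_Suc_conv_app_nth not_le[symmetric])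
  have "(\<forall>j<i. list_monom (take (Suc j) a) \<notin> G) \<longleftrightarrow> list_monom a \<notin> G" if "length a = i"
  proof
    assume "\<forall>j<i. list_monom (take (Suc j) a) \<notin> G"
    from this[rule_format, of "i - 1"] show "list_monom a \<notin> G"
      using that assms(1) by simp
  next
    assume "list_monom a \<notin> G"
    show "\<forall>j<i. list_monom (take (Suc j) a) \<notin> G"
    proof (intro allI impI notI)
      fix j assume "list_monom (take (Suc j) a) \<in> G"
      then have "list_monom a \<in> G"
        by (rule list_monom_dvd_closed) (auto intro!: mdvd_list_monom simp: that assms)
      with \<open>list_monom a \<notin> G\<close> show False ..
    qed
  qed
  then show ?thesis
    unfolding Jset_def using step assms by auto
qed

lemma min_gen_dvd_append:
  assumes "length a < n" "list_monom a \<notin> G" "list_monom (a @ [t]) \<in> G"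
  obtains c u where "min_gen G (list_monom (c @ [u]))" "length c = length a"
    "\<forall>j<length a. c ! j \<le> a ! j" "1 \<le> u" "u \<le> t"
proof -
  let ?i = "length a"
  obtain g where g: "min_gen G g" "mdvd g (list_monom (a @ [t]))"
    using assms(3) by (rule min_gen_dvd_exists)
  then have below: "Poly_Mapping.lookup g j \<le> Poly_Mapping.lookup (list_monom (a @ [t])) j" for j
    unfolding mdvd_def by blast
  define c where "c = map (Poly_Mapping.lookup g) [0..<?i]"
  define u where "u = Poly_Mapping.lookup g ?i"
  have "g = list_monom (map (Poly_Mapping.lookup g) [0..<Suc ?i])"
  proof (rule list_monom_of_support)
    fix j assume "Suc ?i \<le> j"
    then show "Poly_Mapping.lookup g j = 0" using below[of j] by simp
  qed
  also have "\<dots> = list_monom (c @ [u])" by (simp add: c_def u_def)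
  finally have g_eq: "g = list_monom (c @ [u])" .
  have "1 \<le> u"
  proof (rule ccontr)
    assume "\<not> 1 \<le> u"
    then have "mdvd g (list_monom a)"
      unfolding mdvd_def
    proof (intro allI)
      fix j
      show "Poly_Mapping.lookup g j \<le> Poly_Mapping.lookup (list_monom a) j"
        using below[of j] \<open>\<not> 1 \<le> u\<close> unfolding u_def
        by (cases j ?i rule: linorder_cases) (simp_all add: nth_append)
    qed
    then have "list_monom a \<in> G"
      using g(1) assms(1) unfolding min_gen_def
      by (blast intro: dvd_closed[of g, OF _ _ monom_in_list_monom] less_imp_le)
    with assms(2) show False ..
  qed
  moreover have "c ! j \<le> a ! j" if "j < ?i" for j
    using below[of j] that by (simp add: c_def nth_append)
  moreover have "u \<le> t"
    using below[of ?i] by (simp add: u_def)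
  moreover have "length c = ?i" by (simp add: c_def)
  ultimately show thesis using g(1) unfolding g_eq by (intro that[of c u]) auto
qed

lemma almost_revlex_raise:
  assumes AR: "almost_revlex n G" and g: "min_gen G (list_monom (c @ [u]))"
    and len: "length d = length c" "length d < n" and "1 \<le> u"
    and sum: "sum_list d = sum_list c + 1"
  shows "list_monom (d @ [u - 1]) \<in> G"
proof -
  have "drl_less (list_monom (c @ [u])) (list_monom (d @ [u - 1]))"
    by (rule drl_less_last_exponent) (use len sum \<open>1 \<le> u\<close> in auto)
  moreover have "mdeg (list_monom (d @ [u - 1])) = mdeg (list_monom (c @ [u]))"
    using sum \<open>1 \<le> u\<close> by simp
  moreover have "monom_in n (list_monom (d @ [u - 1]))"
    using len by (intro monom_in_list_monom) simp
  ultimately show ?thesis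
    using AR g unfolding almost_revlex_def by blast
qed

lemma almost_revlex_swap_prefix:
  assumes AR: "almost_revlex n G" and g: "min_gen G (list_monom (a @ [u]))"
    and len: "length a = length b" "length b < n" and "sum_list a = sum_list b"
    and lt: "drl_less (list_monom a) (list_monom b)"
  shows "list_monom (b @ [u]) \<in> G"
proof -
  have "drl_less (list_monom (a @ [u])) (list_monom (b @ [u]))"
    using lt len(1) by (simp add: drl_less_append_cancel)
  moreover have "mdeg (list_monom (b @ [u])) = mdeg (list_monom (a @ [u]))"
    using \<open>sum_list a = sum_list b\<close> by simp
  moreover have "monom_in n (list_monom (b @ [u]))"
    using len by (intro monom_in_list_monom) simp
  ultimately show ?thesis
    using AR g unfolding almost_revlex_def by blast
qed

lemma almost_revlex_fval_gap:
  assumes AR: "almost_revlex n G" and i: "1 \<le> i" "i < n"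
  shows "fval_gap G i"
  unfolding fval_gap_def
proof
  fix a assume "a \<in> Jset G i"
  then have la: "length a = i" and na: "list_monom a \<notin> G"
    using mem_Jset_iff i by auto
  let ?p = "replicate (i - 1) 0 @ [sum_list a + 1]"
  show "fval G ?p + 1 \<le> fval G a"
  proof (cases "fval G a")
    case infinity then show ?thesis by simp
  next
    case (enat t)
    then have "list_monom (a @ [t]) \<in> G" using fval_le_iff[of a t] la i by simp
    then obtain c u where cu: "min_gen G (list_monom (c @ [u]))" "length c = i"
      "\<forall>j<i. c ! j \<le> a ! j" "1 \<le> u" "u \<le> t"
      using min_gen_dvd_append la na i by (metis)
    have "sum_list c \<le> sum_list a"
      using sum_list_le_pointwise cu(2,3) la by simp
    have "list_monom ((replicate (i - 1) 0 @ [sum_list c + 1]) @ [u - 1]) \<in> G"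
      by (rule almost_revlex_raise[OF AR cu(1)]) (use cu i in simp_all)
    then have "list_monom (?p @ [u - 1]) \<in> G"
      by (rule list_monom_dvd_closed)
        (use \<open>sum_list c \<le> sum_list a\<close> i in \<open>auto intro!: mdvd_list_monom simp: nth_append nth_Cons'\<close>)
    then have "fval G ?p \<le> enat (u - 1)" using fval_le_iff i by simp
    then have "fval G ?p + 1 \<le> enat u" using cu(4) by (simp add: enat_add_one_le_iff)
    also have "\<dots> \<le> fval G a" using enat cu(5) by simp
    finally show ?thesis .
  qed
qed

lemma almost_revlex_fval_antitone:
  assumes AR: "almost_revlex n G" and i: "1 \<le> i" "i < n"
  shows "fval_antitone G i"
  unfolding fval_antitone_def
proof (intro ballI impI, elim conjE)
  fix a b assume "a \<in> Jset G i" "b \<in> Jset G i" and sum_ab: "sum_list a = sum_list b"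
    and lt: "drl_less (list_monom a) (list_monom b)"
  then have la: "length a = i" and na: "list_monom a \<notin> G" and lb: "length b = i"
    using mem_Jset_iff i by auto
  show "fval G b \<le> fval G a"
  proof (cases "fval G a")
    case infinity then show ?thesis by simp
  next
    case (enat t)
    then have "list_monom (a @ [t]) \<in> G" using fval_le_iff[of a t] la i by simp
    then obtain c u where cu: "min_gen G (list_monom (c @ [u]))" "length c = i"
      "\<forall>j<i. c ! j \<le> a ! j" "1 \<le> u" "u \<le> t"
      using min_gen_dvd_append la na i by metis
    have "list_monom (b @ [t]) \<in> G"
    proof (cases "sum_list c < sum_list a")
      case True
      then obtain d where d: "length d = i" "\<forall>j<i. d ! j \<le> b ! j" "sum_list d = sum_list c + 1"
        using exists_list_below_with_sum[of "sum_list c + 1" b] sum_ab lb by auto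
      have "list_monom (d @ [u - 1]) \<in> G"
        by (rule almost_revlex_raise[OF AR cu(1)]) (use d cu i in simp_all)
      then show ?thesis
        by (rule list_monom_dvd_closed) (use d cu lb i in \<open>auto intro!: mdvd_list_monom simp: nth_append\<close>)
    next
      case False
      have "mdvd (list_monom c) (list_monom a)"
        using cu(2,3) la by (intro mdvd_list_monom) simp_all
      moreover have "sum_list c = sum_list a"
        using False sum_list_le_pointwise[of c a] cu(2,3) la by simp
      ultimately have "list_monom c = list_monom a"
        by (intro mdvd_antisym_mdeg) simp_all
      then have "c = a" using list_monom_eq_iff cu(2) la by simp
      then have "list_monom (b @ [u]) \<in> G"
        using cu(1) la lb i sum_ab lt by (intro almost_revlex_swap_prefix[OF AR]) simp_all
      then show ?thesis
        by (rule list_monom_dvd_closed) (use cu lb i in \<open>auto intro!: mdvd_list_monom simp: nth_append\<close>)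
    qed
    then show ?thesis using fval_le_iff[of b t] lb i enat by simp
  qed
qed

lemma min_gen_append_fval:
  assumes g: "min_gen G (list_monom (a @ [t]))" and "1 \<le> t" "length a < n"
  shows "fval G a = enat t" and "list_monom a \<notin> G"
proof -
  have not_in: "list_monom (a @ [t']) \<notin> G" if "t' < t" for t'
  proof
    assume "list_monom (a @ [t']) \<in> G"
    moreover have "mdvd (list_monom (a @ [t'])) (list_monom (a @ [t]))"
      using that by (intro mdvd_list_monom) (simp_all add: nth_append)
    ultimately have "list_monom (a @ [t']) = list_monom (a @ [t])"
      using g unfolding min_gen_def by blast
    with that show False by (simp add: list_monom_eq_iff)
  qed
  from not_in[of 0] show "list_monom a \<notin> G"
    using \<open>1 \<le> t\<close> list_monom_append[of a 0] by simp
  have "list_monom (a @ [t]) \<in> G" using g unfolding min_gen_def by simp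
  then have "fval G a \<le> enat t" using fval_le_iff assms(3) by simp
  moreover have "\<not> fval G a \<le> enat (t - 1)"
    using not_in[of "t - 1"] fval_le_iff assms(2,3) by simp
  ultimately show "fval G a = enat t"
    by (cases "fval G a") auto
qed

lemma pure_power_spreads:
  assumes below: "almost_revlex_below n k G" and k: "1 \<le> k" "k \<le> n"
    and pow: "list_monom (replicate (k - 1) 0 @ [d]) \<in> G"
    and b: "length b = k" "sum_list b = d"
  shows "list_monom b \<in> G"
proof -
  txt \<open>A minimal generator dividing the pure power x_k^d is a pure power x_k^e, the smallest
    monomial of degree e in x_1, ..., x_k.\<close>
  obtain g where g: "min_gen G g" "mdvd g (list_monom (replicate (k - 1) 0 @ [d]))"
    using pow by (rule min_gen_dvd_exists)
  define e where "e = Poly_Mapping.lookup g (k - 1)"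
  have g_le: "Poly_Mapping.lookup g j \<le> (if j = k - 1 then d else 0)" for j
    using g(2) unfolding mdvd_def by (metis lookup_pure_power)
  have g_eq: "g = list_monom (replicate (k - 1) 0 @ [e])"
  proof (rule poly_mapping_eqI)
    fix j
    show "Poly_Mapping.lookup g j = Poly_Mapping.lookup (list_monom (replicate (k - 1) 0 @ [e])) j"
      using g_le[of j] unfolding lookup_pure_power e_def by (simp split: if_splits)
  qed
  obtain b' where b': "length b' = k" "\<forall>j<k. b' ! j \<le> b ! j" "sum_list b' = e"
    using exists_list_below_with_sum[of e b] g_le[of "k - 1"] b unfolding e_def by auto
  have "list_monom b' \<in> G"
  proof (cases "b' = replicate (k - 1) 0 @ [e]")
    case True then show ?thesis using g(1) g_eq unfolding min_gen_def by simp
  next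
    case False
    then have "drl_less g (list_monom b')"
      using drl_less_pure_power[of b'] b'(1,3) k(1) g_eq by simp
    moreover have "monom_in k g" and "monom_in n (list_monom b')"
      using g_eq k b'(1) by (simp_all add: monom_in_list_monom)
    moreover have "mdeg (list_monom b') = mdeg g" using g_eq b'(3) by simp
    ultimately show ?thesis
      using below g(1) unfolding almost_revlex_below_def by blast
  qed
  then show ?thesis
    by (rule list_monom_dvd_closed) (use b b' k in \<open>auto intro: mdvd_list_monom\<close>)
qed

lemma pure_power_staircase:
  assumes gap: "fval_gap G k" and k: "1 \<le> k" "k < n"
    and a: "a \<in> Jset G k" "fval G a = enat t" and r: "1 \<le> r" "r \<le> t"
  shows "list_monom ((replicate (k - 1) 0 @ [sum_list a + r]) @ [t - r]) \<in> G"
  using r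
proof (induction r rule: nat_induct_at_least)
  case base
  have "fval G (replicate (k - 1) 0 @ [sum_list a + 1]) + 1 \<le> enat t"
    using gap a unfolding fval_gap_def by force
  then show ?case
    using fval_le_iff k by (simp add: enat_add_one_le_iff)
next
  case (Suc r)
  let ?p = "replicate (k - 1) 0 @ [sum_list a + r]"
  have p: "length ?p = k" "sum_list ?p = sum_list a + r" using k by simp_all
  have p_next: "replicate (k - 1) 0 @ [sum_list ?p + 1] = replicate (k - 1) 0 @ [sum_list a + Suc r]"
    by simp
  have IH: "list_monom (?p @ [t - r]) \<in> G" using Suc by simp
  show ?case
  proof (cases "list_monom ?p \<in> G")
    case True
    then show ?thesis
      by (rule list_monom_dvd_closed) (use k in \<open>auto intro!: mdvd_list_monom simp: nth_append\<close>)
  next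
    case False
    then have "?p \<in> Jset G k" using mem_Jset_iff k p(1) by simp
    then have "fval G (replicate (k - 1) 0 @ [sum_list a + Suc r]) + 1 \<le> fval G ?p"
      using gap p_next unfolding fval_gap_def by metis
    also have "\<dots> \<le> enat (t - r)" using IH fval_le_iff k by simp
    finally show ?thesis
      using fval_le_iff k by (simp add: enat_add_one_le_iff)
  qed
qed

lemma pure_power_spreads_last:
  assumes below: "almost_revlex_below n k G" and anti: "fval_antitone G k" and k: "1 \<le> k" "k < n"
    and pow: "list_monom ((replicate (k - 1) 0 @ [s]) @ [v]) \<in> G"
    and b: "length b = k" "sum_list b = s"
  shows "list_monom (b @ [v]) \<in> G"
proof -
  let ?p = "replicate (k - 1) 0 @ [s]"
  have "list_monom b \<in> G \<or> fval G b \<le> enat v"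
  proof (cases "list_monom ?p \<in> G")
    case True
    then show ?thesis using pure_power_spreads[OF below] k b by simp
  next
    case p_out: False
    show ?thesis
    proof (cases "list_monom b \<in> G \<or> b = ?p")
      case True
      then show ?thesis using pow fval_le_iff k by auto
    next
      case False
      then have "drl_less (list_monom ?p) (list_monom b)" and "b \<in> Jset G k" "?p \<in> Jset G k"
        using drl_less_pure_power[of b] b k p_out mem_Jset_iff by auto
      then have "fval G b \<le> fval G ?p"
        using anti b unfolding fval_antitone_def by simp
      also have "\<dots> \<le> enat v" using pow fval_le_iff k by simp
      finally show ?thesis ..
    qed
  qed
  then show ?thesis
    using fval_le_iff b k by (auto elim: list_monom_dvd_closed intro: mdvd_list_monom_append)
qed

lemma fval_antitone_append:
  assumes anti: "fval_antitone G k" and k: "1 \<le> k" "k < n"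
    and a: "a \<in> Jset G k" "fval G a = enat t" and b: "length b = k"
    and sum: "sum_list a = sum_list b" and lt: "drl_less (list_monom a) (list_monom b)"
  shows "list_monom (b @ [t]) \<in> G"
proof (cases "list_monom b \<in> G")
  case True
  then show ?thesis
    by (rule list_monom_dvd_closed) (use b k in \<open>simp_all add: mdvd_list_monom_append\<close>)
next
  case False
  then have "b \<in> Jset G k" using b k mem_Jset_iff by simp
  with anti a(1) sum lt have "fval G b \<le> fval G a"
    unfolding fval_antitone_def by blast
  then show ?thesis using a(2) fval_le_iff[of b t] b k by simp
qed

lemma almost_revlex_below_Suc:
  assumes below: "almost_revlex_below n k G" and k: "1 \<le> k" "k < n"
    and gap: "fval_gap G k" and anti: "fval_antitone G k"
  shows "almost_revlex_below n (Suc k) G"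
  unfolding almost_revlex_below_def
proof (intro allI impI, elim conjE)
  fix m M assume mg: "min_gen G m" and mk: "monom_in (Suc k) m" and Mn: "monom_in n M"
    and deg: "mdeg M = mdeg m" and lt: "drl_less m M"
  show "M \<in> G"
  proof (cases "Poly_Mapping.lookup m k = 0")
    case True
    then have "monom_in k m" using mk by (rule monom_in_Suc_top_zero[rotated])
    then show ?thesis using below mg Mn deg lt unfolding almost_revlex_below_def by blast
  next
    case False
    have m_top: "\<forall>l>k. Poly_Mapping.lookup m l = 0"
      using mk unfolding monom_in_def by (auto simp: in_keys_iff)
    define a where "a = map (Poly_Mapping.lookup m) [0..<k]"
    define t where "t = Poly_Mapping.lookup m k"
    define b where "b = map (Poly_Mapping.lookup M) [0..<k]"
    define s where "s = Poly_Mapping.lookup M k"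
    have m_eq: "m = list_monom (a @ [t])"
      unfolding a_def t_def using m_top by (rule list_monom_split_top)
    have M_eq: "M = list_monom (b @ [s])"
      unfolding b_def s_def using drl_less_top_exponent(1)[OF lt deg m_top] by (rule list_monom_split_top)
    have "s \<le> t" unfolding s_def t_def by (rule drl_less_top_exponent(2)[OF lt deg m_top])
    have la: "length a = k" and lb: "length b = k" by (simp_all add: a_def b_def)
    have "1 \<le> t" using False t_def by simp
    then have fa: "fval G a = enat t" and aJ: "a \<in> Jset G k"
      using min_gen_append_fval[of a t] mg m_eq la k mem_Jset_iff by simp_all
    have sum: "sum_list b + s = sum_list a + t" using deg m_eq M_eq by simp
    show ?thesis
    proof (cases "s = t")
      case True
      then have "drl_less (list_monom a) (list_monom b)" and "sum_list a = sum_list b"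
        using lt m_eq M_eq la lb sum by (simp_all add: drl_less_append_cancel)
      then show ?thesis
        unfolding M_eq True by (intro fval_antitone_append[OF anti k aJ fa lb])
    next
      case False
      with \<open>s \<le> t\<close> have "1 \<le> t - s" "t - s \<le> t" by simp_all
      from pure_power_staircase[OF gap k aJ fa this]
      have "list_monom ((replicate (k - 1) 0 @ [sum_list a + (t - s)]) @ [s]) \<in> G"
        using \<open>s \<le> t\<close> by simp
      moreover have "sum_list b = sum_list a + (t - s)" using sum \<open>s \<le> t\<close> by simp
      ultimately show ?thesis
        unfolding M_eq by (rule pure_power_spreads_last[OF below anti k _ lb])
    qed
  qed
qed

theorem almost_revlex_iff_fval_conditions:
  "almost_revlex n G \<longleftrightarrow> (\<forall>i. 1 \<le> i \<and> i \<le> n - 1 \<longrightarrow> fval_gap G i \<and> fval_antitone G i)"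
proof
  assume "almost_revlex n G"
  then show "\<forall>i. 1 \<le> i \<and> i \<le> n - 1 \<longrightarrow> fval_gap G i \<and> fval_antitone G i"
    using almost_revlex_fval_gap almost_revlex_fval_antitone by auto
next
  assume conds: "\<forall>i. 1 \<le> i \<and> i \<le> n - 1 \<longrightarrow> fval_gap G i \<and> fval_antitone G i"
  have "almost_revlex_below n (Suc k) G" if "k \<le> n - 1" for k
    using that
  proof (induction k)
    case 0 show ?case using almost_revlex_below_one by simp
  next
    case (Suc k)
    then show ?case using conds by (intro almost_revlex_below_Suc[of "Suc k"]) auto
  qed
  from this[of "n - 1"] have "almost_revlex_below n n G"
    by (rule almost_revlex_below_mono[rotated]) simp_all
  then show "almost_revlex n G" by (simp add: almost_revlex_iff_below)
qed

end

section \<open>Leading monomials\<close>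

lemma drl_greatest_exists:
  "finite S \<Longrightarrow> S \<noteq> {} \<Longrightarrow> \<exists>m\<in>S. \<forall>m'\<in>S. m' \<noteq> m \<longrightarrow> drl_less m' m"
proof (induction S rule: finite_ne_induct)
  case (singleton x) then show ?case by simp
next
  case (insert x S)
  then obtain m where m: "m \<in> S" "\<forall>m'\<in>S. m' \<noteq> m \<longrightarrow> drl_less m' m" by blast
  show ?case
  proof (cases "drl_less x m")
    case True then show ?thesis using m by auto
  next
    case False
    moreover have "x \<noteq> m" using m(1) insert.hyps by blast
    ultimately have "drl_less m x" using drl_less_total[of x m] by blast
    then show ?thesis using m drl_less_trans by (intro bexI[of _ x]) auto
  qed
qed

lemma lead_monom_eqI:
  assumes "m \<in> Poly_Mapping.keys F" "\<forall>m'\<in>Poly_Mapping.keys F. m' \<noteq> m \<longrightarrow> drl_less m' m"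
  shows "lead_monom F = m"
  unfolding lead_monom_def
proof (rule the_equality)
  fix x assume x: "x \<in> Poly_Mapping.keys F \<and> (\<forall>m'\<in>Poly_Mapping.keys F. m' \<noteq> x \<longrightarrow> drl_less m' x)"
  show "x = m"
  proof (rule ccontr)
    assume "x \<noteq> m"
    then have "drl_less x m" "drl_less m x" using x assms by auto
    then show False using drl_less_trans drl_less_irrefl by blast
  qed
qed (use assms in simp)

lemma lead_monom_greatest:
  assumes "F \<noteq> 0"
  shows "lead_monom F \<in> Poly_Mapping.keys F"
    and "\<forall>m'\<in>Poly_Mapping.keys F. m' \<noteq> lead_monom F \<longrightarrow> drl_less m' (lead_monom F)"
proof -
  obtain m where m: "m \<in> Poly_Mapping.keys F" "\<forall>m'\<in>Poly_Mapping.keys F. m' \<noteq> m \<longrightarrow> drl_less m' m"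
    using drl_greatest_exists[of "Poly_Mapping.keys F"] assms by auto
  with lead_monom_eqI[OF m] show "lead_monom F \<in> Poly_Mapping.keys F"
    and "\<forall>m'\<in>Poly_Mapping.keys F. m' \<noteq> lead_monom F \<longrightarrow> drl_less m' (lead_monom F)"
    by simp_all
qed

lemma poly_mapping_sum_single:
  "f = (\<Sum>m\<in>Poly_Mapping.keys f. Poly_Mapping.single m (Poly_Mapping.lookup f m))"
  by (rule poly_mapping_eqI) (simp add: lookup_sum lookup_single when_def in_keys_iff)

lemma lookup_monomial_mult:
  "Poly_Mapping.lookup (Poly_Mapping.single v 1 * F) (v + m) = Poly_Mapping.lookup (F :: 'k::field mpoly) m"
proof -
  have "Poly_Mapping.single v 1 * F =
      (\<Sum>m'\<in>Poly_Mapping.keys F. Poly_Mapping.single (v + m') (Poly_Mapping.lookup F m'))"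
    by (subst poly_mapping_sum_single[of F]) (simp add: sum_distrib_left mult_single)
  then show ?thesis
    by (simp add: lookup_sum lookup_single when_def in_keys_iff)
qed

lemma lead_monom_monomial_mult:
  fixes F :: "'k::field mpoly"
  assumes "F \<noteq> 0"
  shows "Poly_Mapping.single v 1 * F \<noteq> 0"
    and "lead_monom (Poly_Mapping.single v 1 * F) = v + lead_monom F"
proof -
  let ?P = "Poly_Mapping.single v 1 * F"
  note lead = lead_monom_greatest[OF assms]
  have in_P: "v + lead_monom F \<in> Poly_Mapping.keys ?P"
    using lead(1) by (simp add: in_keys_iff lookup_monomial_mult)
  then show "?P \<noteq> 0" by auto
  have "Poly_Mapping.keys ?P \<subseteq> (\<lambda>m. v + m) ` Poly_Mapping.keys F"
    using keys_mult[of "Poly_Mapping.single v 1" F] by auto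
  then show "lead_monom ?P = v + lead_monom F"
    using lead(2) by (intro lead_monom_eqI[OF in_P]) auto
qed

section \<open>The generic initial ideal is a monomial ideal\<close>

definition act_monom :: "nat \<Rightarrow> (nat \<Rightarrow> nat \<Rightarrow> 'k::field) \<Rightarrow> monom \<Rightarrow> 'k mpoly" where
  "act_monom n g m = (\<Prod>j\<in>Poly_Mapping.keys m. lin_form n g j ^ Poly_Mapping.lookup m j)"

lemma act_monom_superset:
  "finite S \<Longrightarrow> Poly_Mapping.keys m \<subseteq> S \<Longrightarrow>
   act_monom n g m = (\<Prod>j\<in>S. lin_form n g j ^ Poly_Mapping.lookup m j)"
  unfolding act_monom_def by (rule prod.mono_neutral_left) (auto simp: in_keys_iff)

lemma act_monom_add: "act_monom n g (a + b) = act_monom n g a * act_monom n g b"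
proof -
  let ?S = "Poly_Mapping.keys a \<union> Poly_Mapping.keys b"
  have "act_monom n g (a + b) = (\<Prod>j\<in>?S. lin_form n g j ^ Poly_Mapping.lookup (a + b) j)"
    by (rule act_monom_superset) (use keys_add[of a b] in auto)
  also have "\<dots> = (\<Prod>j\<in>?S. lin_form n g j ^ Poly_Mapping.lookup a j) *
      (\<Prod>j\<in>?S. lin_form n g j ^ Poly_Mapping.lookup b j)"
    by (simp add: lookup_add power_add prod.distrib)
  also have "\<dots> = act_monom n g a * act_monom n g b"
    by (simp add: act_monom_superset[symmetric])
  finally show ?thesis .
qed

lemma act_monom_var: "act_monom n g (Poly_Mapping.single i 1) = lin_form n g i"
  unfolding act_monom_def by simp

lemma const_add: "const (a + b) = const a + const b"
  unfolding const_def by (simp add: single_add)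

lemma const_mult: "const (a * b) = const a * const b"
  unfolding const_def by (simp add: mult_single)

lemma const_0 [simp]: "const 0 = 0"
  unfolding const_def by simp

lemma act_superset:
  "finite S \<Longrightarrow> Poly_Mapping.keys f \<subseteq> S \<Longrightarrow>
   act n g f = (\<Sum>m\<in>S. const (Poly_Mapping.lookup f m) * act_monom n g m)"
  unfolding act_def act_monom_def[symmetric] by (rule sum.mono_neutral_left) (auto simp: in_keys_iff)

lemma act_add: "act n g (f + h) = act n g f + act n g h"
proof -
  let ?S = "Poly_Mapping.keys f \<union> Poly_Mapping.keys h"
  have "act n g (f + h) = (\<Sum>m\<in>?S. const (Poly_Mapping.lookup (f + h) m) * act_monom n g m)"
    by (rule act_superset) (use keys_add[of f h] in auto)
  also have "\<dots> = act n g f + act n g h"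
    by (simp add: lookup_add const_add distrib_right sum.distrib act_superset[of ?S f] act_superset[of ?S h])
  finally show ?thesis .
qed

lemma act_zero [simp]: "act n g 0 = 0"
  unfolding act_def by simp

lemma act_sum: "act n g (\<Sum>x\<in>A. F x) = (\<Sum>x\<in>A. act n g (F x))"
  by (induction A rule: infinite_finite_induct) (simp_all add: act_add)

lemma act_single: "act n g (Poly_Mapping.single m c) = const c * act_monom n g m"
  by (cases "c = 0") (simp_all add: act_def act_monom_def)

lemma act_mult: "act n g (p * q) = act n g p * act n g q"
proof -
  let ?sp = "\<lambda>a. Poly_Mapping.single a (Poly_Mapping.lookup p a)"
  let ?sq = "\<lambda>c. Poly_Mapping.single c (Poly_Mapping.lookup q c)"
  have single_mult: "act n g (?sp a * ?sq c) = act n g (?sp a) * act n g (?sq c)" for a c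
    by (simp add: mult_single act_single act_monom_add const_mult ac_simps)
  have "p * q = (\<Sum>a\<in>Poly_Mapping.keys p. \<Sum>c\<in>Poly_Mapping.keys q. ?sp a * ?sq c)"
    by (subst poly_mapping_sum_single[of p], subst poly_mapping_sum_single[of q]) (rule sum_product)
  then have "act n g (p * q) =
      (\<Sum>a\<in>Poly_Mapping.keys p. \<Sum>c\<in>Poly_Mapping.keys q. act n g (?sp a) * act n g (?sq c))"
    by (simp add: act_sum single_mult)
  also have "\<dots> = act n g p * act n g q"
    by (simp add: sum_product[symmetric] act_sum[symmetric] poly_mapping_sum_single[symmetric])
  finally show ?thesis .
qed

lemma single_sum: "Poly_Mapping.single k (\<Sum>x\<in>A. f x) = (\<Sum>x\<in>A. Poly_Mapping.single k (f x))"
  by (induction A rule: infinite_finite_induct) (simp_all add: single_add)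

lemma act_lin_form_inverse:
  assumes inv: "\<forall>i<n. \<forall>j<n. (\<Sum>l<n. g i l * h l j) = (if i = j then 1 else 0)" and k: "k < n"
  shows "act n g (lin_form n h k) = Poly_Mapping.single (Poly_Mapping.single k 1) 1"
proof -
  have "act n g (lin_form n h k) = (\<Sum>i<n. const (h i k) * lin_form n g i)"
    unfolding lin_form_def[of n h] by (simp add: act_sum act_single act_monom_var[unfolded One_nat_def])
  also have "\<dots> = (\<Sum>i<n. \<Sum>l<n. Poly_Mapping.single (Poly_Mapping.single l 1) (h i k * g l i))"
    unfolding lin_form_def const_def by (simp add: sum_distrib_left mult_single)
  also have "\<dots> = (\<Sum>l<n. \<Sum>i<n. Poly_Mapping.single (Poly_Mapping.single l 1) (g l i * h i k))"
    by (subst sum.swap) (simp add: mult.commute)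
  also have "\<dots> = (\<Sum>l<n. Poly_Mapping.single (Poly_Mapping.single l 1) (\<Sum>i<n. g l i * h i k))"
    by (simp add: single_sum)
  also have "\<dots> = (\<Sum>l<n. if l = k then Poly_Mapping.single (Poly_Mapping.single k 1) 1 else 0)"
    using inv k by (intro sum.cong) auto
  also have "\<dots> = Poly_Mapping.single (Poly_Mapping.single k 1) 1"
    using k by simp
  finally show ?thesis .
qed

lemma monomial_idealI:
  assumes monom_in: "\<And>m. m \<in> G \<Longrightarrow> monom_in n m"
    and var_closed: "\<And>m k. m \<in> G \<Longrightarrow> k < n \<Longrightarrow> Poly_Mapping.single k 1 + m \<in> G"
  shows "monomial_ideal n G"
proof
  have mult_closed: "u + m \<in> G" if "m \<in> G" "monom_in n u" for u m
    using that
  proof (induction "mdeg u" arbitrary: u)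
    case 0 then show ?case by (simp add: mdeg_eq_0_iff)
  next
    case (Suc d)
    then obtain k where k: "k \<in> Poly_Mapping.keys u"
      by (metis mdeg_eq_0_iff keys_eq_empty ex_in_conv nat.simps(3))
    define u' where "u' = u - Poly_Mapping.single k 1"
    have u_eq: "u = Poly_Mapping.single k 1 + u'"
      using k unfolding u'_def
      by (intro poly_mapping_eqI) (auto simp: lookup_add lookup_minus lookup_single when_def in_keys_iff)
    have "monom_in n u'"
      using Suc.prems(2) unfolding u'_def by (rule monom_in_diff)
    moreover have "d = mdeg u'" using Suc.hyps(2) u_eq by (simp add: mdeg_add)
    ultimately have "u' + m \<in> G" using Suc by blast
    moreover have "k < n" using k Suc.prems(2) unfolding monom_in_def by auto
    ultimately show ?case unfolding u_eq add.assoc by (rule var_closed)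
  qed
  show "m' \<in> G" if "m \<in> G" "mdvd m m'" "monom_in n m'" for m m'
  proof -
    have "monom_in n (m' - m)"
      using that(3) by (rule monom_in_diff)
    then show ?thesis
      by (subst mdvd_imp_eq_add[OF that(2)]) (rule mult_closed[OF that(1)])
  qed
qed (rule monom_in)

lemma poly_ring_add: "f \<in> poly_ring n \<Longrightarrow> h \<in> poly_ring n \<Longrightarrow> f + h \<in> poly_ring n"
  unfolding poly_ring_def using keys_add[of f h] by blast

lemma monom_in_add: "monom_in n a \<Longrightarrow> monom_in n b \<Longrightarrow> monom_in n (a + b)"
  unfolding monom_in_def using keys_add[of a b] by blast

lemma poly_ring_mult: "f \<in> poly_ring n \<Longrightarrow> h \<in> poly_ring n \<Longrightarrow> f * h \<in> poly_ring n"
  unfolding poly_ring_def using keys_mult[of f h] monom_in_add by blast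

lemma poly_ring_zero: "0 \<in> poly_ring n"
  unfolding poly_ring_def by simp

lemma poly_ring_sum: "(\<And>x. x \<in> A \<Longrightarrow> F x \<in> poly_ring n) \<Longrightarrow> (\<Sum>x\<in>A. F x) \<in> poly_ring n"
  by (induction A rule: infinite_finite_induct) (auto intro: poly_ring_add poly_ring_zero)

lemma poly_ring_one: "1 \<in> poly_ring n"
  unfolding poly_ring_def monom_in_def by simp

lemma poly_ring_prod: "(\<And>x. x \<in> A \<Longrightarrow> F x \<in> poly_ring n) \<Longrightarrow> (\<Prod>x\<in>A. F x) \<in> poly_ring n"
  by (induction A rule: infinite_finite_induct) (auto intro: poly_ring_mult poly_ring_one)

lemma poly_ring_power: "f \<in> poly_ring n \<Longrightarrow> f ^ k \<in> poly_ring n"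
  by (induction k) (auto intro: poly_ring_mult poly_ring_one)

lemma poly_ring_const: "const c \<in> poly_ring n"
  unfolding poly_ring_def const_def monom_in_def by simp

lemma poly_ring_lin_form: "lin_form n g j \<in> poly_ring n"
  unfolding lin_form_def by (rule poly_ring_sum) (simp add: poly_ring_def monom_in_def)

lemma act_in_poly_ring: "act n g f \<in> poly_ring n"
  unfolding act_def
  by (intro poly_ring_sum poly_ring_mult poly_ring_const poly_ring_prod poly_ring_power poly_ring_lin_form)

lemma in_ideal_act_monomial_ideal:
  fixes I :: "'k::field mpoly set"
  assumes I: "is_ideal n I" and g: "invertible_n n g"
  shows "monomial_ideal n (in_ideal (act n g ` I))"
proof (rule monomial_idealI)
  fix m assume "m \<in> in_ideal (act n g ` I)"
  then obtain f where "act n g f \<noteq> 0" "m = lead_monom (act n g f)"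
    unfolding in_ideal_def by blast
  then have "m \<in> Poly_Mapping.keys (act n g f)" using lead_monom_greatest(1) by simp
  then show "monom_in n m" using act_in_poly_ring[of n g f] unfolding poly_ring_def by blast
next
  fix m k assume "m \<in> in_ideal (act n g ` I)" and k: "k < n"
  then obtain f where f: "f \<in> I" "act n g f \<noteq> 0" "m = lead_monom (act n g f)"
    unfolding in_ideal_def by blast
  obtain h where h: "\<forall>i<n. \<forall>j<n. (\<Sum>l<n. g i l * h l j) = (if i = j then 1 else 0)"
    using g unfolding invertible_n_def by blast
  define F where "F = act n g (lin_form n h k * f)"
  have "lin_form n h k * f \<in> I"
    using I f(1) poly_ring_lin_form unfolding is_ideal_def by blast
  then have "F \<in> act n g ` I" unfolding F_def by (rule imageI)
  moreover have "F = Poly_Mapping.single (Poly_Mapping.single k 1) 1 * act n g f"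
    unfolding F_def by (simp add: act_mult act_lin_form_inverse[OF h k])
  then have "F \<noteq> 0" and "lead_monom F = Poly_Mapping.single k 1 + m"
    using lead_monom_monomial_mult[OF f(2)] f(3) by simp_all
  ultimately show "Poly_Mapping.single k 1 + m \<in> in_ideal (act n g ` I)"
    unfolding in_ideal_def by force
qed

lemma gin_monomial_ideal:
  fixes I :: "'k::field mpoly set"
  assumes "homogeneous_ideal n I" and "is_gin n I G"
  shows "monomial_ideal n G"
proof -
  obtain g where "invertible_n n g" "in_ideal (act n g ` I) = G"
    using assms(2) unfolding is_gin_def by blast
  then show ?thesis
    using assms(1) in_ideal_act_monomial_ideal[of n I g] unfolding homogeneous_ideal_def by simp
qed

theorem lemma2p1:
  fixes I :: "('k::field_char_0) mpoly set" and n :: nat and G :: "monom set"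
  assumes "homogeneous_ideal n I" and "artinian n I" and "is_gin n I G"
  shows "almost_revlex n G \<longleftrightarrow>
    (\<forall>i. 1 \<le> i \<and> i \<le> n - 1 \<longrightarrow>
      (\<forall>a\<in>Jset G i. fval G (replicate (i - 1) 0 @ [sum_list a + 1]) + 1 \<le> fval G a) \<and>
      (\<forall>a\<in>Jset G i. \<forall>b\<in>Jset G i. sum_list a = sum_list b \<and>
          drl_less (list_monom a) (list_monom b) \<longrightarrow> fval G b \<le> fval G a))"
proof -
  interpret monomial_ideal n G
    using assms(1,3) by (rule gin_monomial_ideal)
  show ?thesis
    using almost_revlex_iff_fval_conditions unfolding fval_gap_def fval_antitone_def .
qed

end
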